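(* Let $\Omega=x\frac{d}{dx}$. For functions $f,g$ possessing all necessary derivatives and every integer $n\ge 1$, \[ \Omega^n (f\circ g) = \sum_{\pi\in\Pi_n} \left( f^{(|\pi|)}\circ g \right) \prod_{B\in \pi} \Omega^{|B|}g. \]
   Context: $\Pi_n$ is the set of all set partitions of $[n]=\{1,\dots,n\}$; for $\pi\in\Pi_n$, $|\pi|$ is its number of blocks and $|B|$ the size of a block $B$. $f^{(j)}$ is the $j$th derivative of $f$. *)

theory Defs
  imports "HOL-Analysis.Analysis" "HOL-Library.Disjoint_Sets"
begin

definition Omega :: "(real \<Rightarrow> real) \<Rightarrow> real \<Rightarrow> real" where
  "Omega h = (\<lambda>x. x * deriv h x)"

end

theory Submission
  imports Defs
begin

text \<open>Apply \<Omega> to the summand of a partition \<pi> of [n] by the product rule.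
The derivative of the factor f^(|\<pi>|) \<circ> g contributes (f^(|\<pi>|+1) \<circ> g) x g', and x g' = \<Omega> g,
so this is the summand of \<pi> with the new block {n+1}; the derivative of a factor \<Omega>^|B| g
contributes \<Omega>^(|B|+1) g, the summand of \<pi> with n+1 put into B. Every partition of [n+1] arises
exactly once in this way, from the partition of [n] obtained by deleting n+1 from its block.\<close>

definition smooth :: "(real \<Rightarrow> real) \<Rightarrow> bool" where
  "smooth h \<longleftrightarrow> (\<forall>k y. (deriv ^^ k) h differentiable at y)"

lemma smooth_has_real_derivative:
  "smooth h \<Longrightarrow> ((deriv ^^ k) h has_real_derivative (deriv ^^ Suc k) h y) (at y)"
  unfolding smooth_def by (simp add: DERIV_deriv_iff_real_differentiable)

lemma smooth_deriv: "smooth h \<Longrightarrow> smooth (deriv h)"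
  unfolding smooth_def by (metis comp_apply funpow_Suc_right)

lemma higher_deriv_times_x:
  assumes "smooth h"
  shows "(deriv ^^ Suc k) (\<lambda>x. x * h x) =
    (\<lambda>x. x * (deriv ^^ Suc k) h x + real (Suc k) * (deriv ^^ k) h x)"
proof (induction k)
  case 0
  have "deriv (\<lambda>x. x * h x) y = y * deriv h y + h y" for y
    using smooth_has_real_derivative[OF assms, of 0 y]
    by (intro DERIV_imp_deriv) (auto intro!: derivative_eq_intros)
  then show ?case by auto
next
  case (Suc k)
  have "deriv (\<lambda>x. x * (deriv ^^ Suc k) h x + real (Suc k) * (deriv ^^ k) h x) y =
    y * (deriv ^^ Suc (Suc k)) h y + real (Suc (Suc k)) * (deriv ^^ Suc k) h y" for y
    using smooth_has_real_derivative[OF assms, of "Suc k" y] smooth_has_real_derivative[OF assms, of k y]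
    by (intro DERIV_imp_deriv) (auto intro!: derivative_eq_intros simp: algebra_simps)
  then show ?case
    using Suc by simp
qed

lemma smooth_times_x:
  assumes "smooth h"
  shows "smooth (\<lambda>x. x * h x)"
  unfolding smooth_def
proof (intro allI)
  fix k y
  show "(deriv ^^ k) (\<lambda>x. x * h x) differentiable at y"
  proof (cases k)
    case 0
    have "h differentiable at y"
      using assms unfolding smooth_def by (metis funpow_0)
    then show ?thesis
      using 0 by (auto intro!: derivative_intros)
  next
    case (Suc m)
    have "(deriv ^^ Suc m) h differentiable at y" "(deriv ^^ m) h differentiable at y"
      using assms unfolding smooth_def by blast+
    then have "(\<lambda>x. x * (deriv ^^ Suc m) h x + real (Suc m) * (deriv ^^ m) h x) differentiable at y"
      by (intro derivative_intros)
    then show ?thesis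
      unfolding Suc higher_deriv_times_x[OF assms] .
  qed
qed

lemma smooth_Omega: "smooth h \<Longrightarrow> smooth (Omega h)"
  unfolding Omega_def by (intro smooth_times_x smooth_deriv)

lemma smooth_funpow_Omega: "smooth h \<Longrightarrow> smooth ((Omega ^^ m) h)"
  by (induction m) (auto intro: smooth_Omega)

lemma partition_on_insert_singleton:
  assumes "partition_on A P" "a \<notin> A"
  shows "partition_on (insert a A) (insert {a} P)"
proof -
  have "disjnt {a} (\<Union>P)"
    using assms by (auto dest: partition_onD1)
  with assms show ?thesis
    by (simp add: partition_on_insert)
qed

lemma partition_on_insert_into_block:
  assumes P: "partition_on A P" and "a \<notin> A" "B \<in> P"
  shows "partition_on (insert a A) (insert (insert a B) (P - {B}))"
proof -
  have B_disjnt: "disjnt B (\<Union>(P - {B}))"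
    using P \<open>B \<in> P\<close> by (auto simp: partition_on_def disjnt_def disjoint_def)
  moreover have "partition_on A (insert B (P - {B}))"
    using P \<open>B \<in> P\<close> by (simp add: insert_absorb)
  ultimately have rest: "partition_on (A - B) (P - {B})"
    using partition_on_insert[of B "P - {B}" A] by blast
  have "disjnt (insert a B) (\<Union>(P - {B}))"
    using B_disjnt \<open>a \<notin> A\<close> partition_onD1[OF rest] by (auto simp: disjnt_def)
  moreover have "insert a A - insert a B = A - B" "B \<subseteq> A"
    using assms by (auto dest: partition_onD1)
  ultimately show ?thesis
    using rest by (auto simp: partition_on_insert)
qed

definition delete_from_blocks :: "'a \<Rightarrow> 'a set set \<Rightarrow> 'a set set" where
  "delete_from_blocks a Q = (\<lambda>C. C - {a}) ` Q - {{}}"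

lemma partition_on_delete_from_blocks:
  "partition_on A Q \<Longrightarrow> partition_on (A - {a}) (delete_from_blocks a Q)"
  unfolding delete_from_blocks_def by (intro partition_on_transform) (auto simp: disjnt_def)

lemma delete_from_blocks_insert_singleton:
  assumes "partition_on A P" "a \<notin> A"
  shows "delete_from_blocks a (insert {a} P) = P"
proof -
  have "C - {a} = C" "C \<noteq> {}" if "C \<in> P" for C
    using assms that by (auto simp: partition_on_def)
  then show ?thesis
    unfolding delete_from_blocks_def by (auto simp: image_iff)
qed

lemma delete_from_blocks_insert_into_block:
  assumes "partition_on A P" "a \<notin> A" "B \<in> P"
  shows "delete_from_blocks a (insert (insert a B) (P - {B})) = P"
proof -
  have "C - {a} = C" "C \<noteq> {}" if "C \<in> P" for C
    using assms that by (auto simp: partition_on_def)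
  then show ?thesis
    using \<open>B \<in> P\<close> unfolding delete_from_blocks_def by (auto simp: image_iff)
qed

lemma partition_on_insert_cases:
  assumes Q: "partition_on (insert a A) Q" and "a \<notin> A"
  obtains "Q = insert {a} (delete_from_blocks a Q)"
    | B where "B \<in> delete_from_blocks a Q"
        "Q = insert (insert a B) (delete_from_blocks a Q - {B})"
proof -
  obtain B0 where B0: "B0 \<in> Q" "a \<in> B0"
    using partition_onD1[OF Q] by auto
  have disjoint_blocks: "C \<inter> D = {}" if "C \<in> Q" "D \<in> Q" "C \<noteq> D" for C D
    using Q that by (auto simp: partition_on_def disjoint_def)
  have "{} \<notin> Q"
    using Q by (rule partition_onD3)
  have "(\<lambda>C. C - {a}) ` (Q - {B0}) = Q - {B0}"
  proof (rule image_cong[OF refl, where g = "\<lambda>C. C", simplified])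
    fix C assume "C \<in> Q - {B0}"
    then show "C - {a} = C"
      using disjoint_blocks[of C B0] B0 by auto
  qed
  then have "(\<lambda>C. C - {a}) ` Q = insert (B0 - {a}) (Q - {B0})"
    using B0 by (metis image_insert insert_Diff)
  then have P: "delete_from_blocks a Q = insert (B0 - {a}) (Q - {B0}) - {{}}"
    unfolding delete_from_blocks_def by simp
  show thesis
  proof (cases "B0 = {a}")
    case True
    then show thesis
      using that(1) P B0 \<open>{} \<notin> Q\<close> by auto
  next
    case False
    define B where "B = B0 - {a}"
    have "B \<noteq> {}" "B \<subseteq> B0"
      using False B0 by (auto simp: B_def)
    then have "B \<notin> Q - {B0}"
      using disjoint_blocks[of B B0] B0(1) by blast
    then have "delete_from_blocks a Q - {B} = Q - {B0}"
      using P \<open>{} \<notin> Q\<close> by (auto simp: B_def)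
    moreover have "B \<in> delete_from_blocks a Q" "insert a B = B0"
      using P \<open>B \<noteq> {}\<close> B0 by (auto simp: B_def)
    ultimately show thesis
      using that(2)[of B] B0 by (simp add: insert_absorb)
  qed
qed

lemma insert_into_block_cancel:
  assumes "partition_on A P" "a \<notin> A" "B \<in> P" "B' \<in> P"
    and "insert (insert a B) (P - {B}) = insert (insert a B') (P - {B'})"
  shows "B = B'"
proof -
  have a_notin: "a \<notin> C" if "C \<in> P" for C
    using assms(1,2) that by (auto dest: partition_onD1)
  have "insert a B \<notin> P - {B'}"
    using a_notin by blast
  then have "insert a B = insert a B'"
    using assms(5) by blast
  then show ?thesis
    using a_notin[OF \<open>B \<in> P\<close>] a_notin[OF \<open>B' \<in> P\<close>] by (metis insert_ident)
qed

lemma sum_partition_on_insert: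
  fixes W :: "'a set set \<Rightarrow> 'b::comm_monoid_add"
  assumes "finite A" "a \<notin> A"
  shows "(\<Sum>Q | partition_on (insert a A) Q. W Q) =
    (\<Sum>P | partition_on A P. W (insert {a} P) + (\<Sum>B\<in>P. W (insert (insert a B) (P - {B}))))"
proof -
  let ?Pi = "{P. partition_on A P}"
  let ?add_into = "\<lambda>(P, B). insert (insert a B) (P - {B})"
  let ?new_block = "insert {a} ` ?Pi" and ?old_block = "?add_into ` (SIGMA P:?Pi. P)"
  have finite_Pi: "finite ?Pi"
    using assms(1) by (rule finitely_many_partition_on)
  have finite_Sigma: "finite (SIGMA P:?Pi. P)"
    using finite_Pi assms(1) finite_elements by blast
  have "{Q. partition_on (insert a A) Q} \<subseteq> ?new_block \<union> ?old_block"
  proof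
    fix Q assume "Q \<in> {Q. partition_on (insert a A) Q}"
    then have Q: "partition_on (insert a A) Q" by simp
    have P: "delete_from_blocks a Q \<in> ?Pi"
      using partition_on_delete_from_blocks[OF Q, of a] assms(2) by simp
    from Q assms(2) show "Q \<in> ?new_block \<union> ?old_block"
    proof (cases rule: partition_on_insert_cases)
      case 1
      then show ?thesis
        using P by (intro UnI1 image_eqI)
    next
      case (2 B)
      then show ?thesis
        using P by (intro UnI2 image_eqI[where x = "(delete_from_blocks a Q, B)"]) auto
    qed
  qed
  moreover have "?new_block \<union> ?old_block \<subseteq> {Q. partition_on (insert a A) Q}"
    using partition_on_insert_singleton partition_on_insert_into_block assms(2) by auto
  ultimately have partitions_eq: "{Q. partition_on (insert a A) Q} = ?new_block \<union> ?old_block"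
    by blast
  have "inj_on (insert {a}) ?Pi"
    by (rule inj_on_inverseI[where g = "delete_from_blocks a"])
      (simp add: delete_from_blocks_insert_singleton assms(2))
  then have sum_new: "sum W ?new_block = (\<Sum>P\<in>?Pi. W (insert {a} P))"
    by (simp add: sum.reindex)
  have "inj_on ?add_into (SIGMA P:?Pi. P)"
  proof (rule inj_onI, clarify)
    fix P B P' B'
    assume P: "partition_on A P" "B \<in> P" and P': "partition_on A P'" "B' \<in> P'"
      and eq: "insert (insert a B) (P - {B}) = insert (insert a B') (P' - {B'})"
    have "P = delete_from_blocks a (insert (insert a B) (P - {B}))"
      using delete_from_blocks_insert_into_block[OF P(1) assms(2) P(2)] by simp
    also have "\<dots> = P'"
      unfolding eq by (rule delete_from_blocks_insert_into_block[OF P'(1) assms(2) P'(2)])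
    finally show "P = P' \<and> B = B'"
      using insert_into_block_cancel[OF P(1) assms(2) P(2)] P'(2) eq by blast
  qed
  then have "sum W ?old_block = (\<Sum>(P, B)\<in>(SIGMA P:?Pi. P). W (insert (insert a B) (P - {B})))"
    by (simp add: sum.reindex case_prod_unfold)
  also have "\<dots> = (\<Sum>P\<in>?Pi. \<Sum>B\<in>P. W (insert (insert a B) (P - {B})))"
    using finite_Pi assms(1) finite_elements by (subst sum.Sigma) auto
  finally have sum_old: "sum W ?old_block = (\<Sum>P\<in>?Pi. \<Sum>B\<in>P. W (insert (insert a B) (P - {B})))" .
  have "{a} \<notin> insert (insert a B) (P - {B})" if "partition_on A P" "B \<in> P" for P B
  proof -
    have "a \<notin> \<Union>P" "B \<noteq> {}"
      using that assms(2) by (auto dest: partition_onD1 partition_onD3)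
    then show ?thesis
      using that(2) by auto
  qed
  then have "?new_block \<inter> ?old_block = {}"
    by fastforce
  then show ?thesis
    unfolding partitions_eq
    by (simp add: sum.union_disjoint finite_Pi finite_Sigma sum_new sum_old sum.distrib)
qed

lemma Omega_sum:
  assumes "\<And>i. i \<in> I \<Longrightarrow> h i differentiable at x"
  shows "Omega (\<lambda>y. \<Sum>i\<in>I. h i y) x = (\<Sum>i\<in>I. Omega (h i) x)"
proof -
  have "((\<lambda>y. \<Sum>i\<in>I. h i y) has_real_derivative (\<Sum>i\<in>I. deriv (h i) x)) (at x)"
    using assms by (intro DERIV_sum) (simp add: DERIV_deriv_iff_real_differentiable)
  then show ?thesis
    by (simp add: Omega_def DERIV_imp_deriv sum_distrib_left)
qed

definition partition_term :: "(real \<Rightarrow> real) \<Rightarrow> (real \<Rightarrow> real) \<Rightarrow> 'a set set \<Rightarrow> real \<Rightarrow> real" where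
  "partition_term f g P x = (deriv ^^ card P) f (g x) * (\<Prod>B\<in>P. (Omega ^^ card B) g x)"

lemma has_real_derivative_partition_term:
  assumes f: "smooth f" and g: "smooth g"
  shows "(partition_term f g P has_real_derivative
      (deriv ^^ Suc (card P)) f (g x) * deriv g x * (\<Prod>B\<in>P. (Omega ^^ card B) g x) +
      (deriv ^^ card P) f (g x) *
        (\<Sum>B\<in>P. deriv ((Omega ^^ card B) g) x * (\<Prod>C\<in>P - {B}. (Omega ^^ card C) g x))) (at x)"
proof -
  have "((\<lambda>x. (deriv ^^ card P) f (g x)) has_real_derivative
      (deriv ^^ Suc (card P)) f (g x) * deriv g x) (at x)"
    using DERIV_chain2[OF smooth_has_real_derivative[OF f] smooth_has_real_derivative[OF g, of 0]]
    by simp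
  moreover have "((\<lambda>x. \<Prod>B\<in>P. (Omega ^^ card B) g x) has_real_derivative
      (\<Sum>B\<in>P. deriv ((Omega ^^ card B) g) x * (\<Prod>C\<in>P - {B}. (Omega ^^ card C) g x))) (at x)"
    using smooth_has_real_derivative[OF smooth_funpow_Omega[OF g], of 0]
    by (intro has_field_derivative_prod) simp
  ultimately show ?thesis
    unfolding partition_term_def by (auto intro: derivative_eq_intros simp: algebra_simps)
qed

lemma Omega_partition_term:
  assumes f: "smooth f" and g: "smooth g"
    and P: "partition_on A P" and "finite A" "a \<notin> A"
  shows "Omega (partition_term f g P) x = partition_term f g (insert {a} P) x +
    (\<Sum>B\<in>P. partition_term f g (insert (insert a B) (P - {B})) x)"
proof -
  have "finite P"
    using \<open>finite A\<close> P by (rule finite_elements)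
  have block: "finite B" "a \<notin> B" if "B \<in> P" for B
    using P that \<open>finite A\<close> \<open>a \<notin> A\<close> by (auto dest: partition_onD1 intro: finite_subset)
  have Omega_Suc: "(Omega ^^ Suc m) g x = x * deriv ((Omega ^^ m) g) x" for m
    by (simp add: Omega_def)
  have new_block: "partition_term f g (insert {a} P) x =
      x * ((deriv ^^ Suc (card P)) f (g x) * deriv g x * (\<Prod>B\<in>P. (Omega ^^ card B) g x))"
  proof -
    have "{a} \<notin> P"
      using block(2) by blast
    with \<open>finite P\<close> show ?thesis
      by (simp add: Omega_def partition_term_def)
  qed
  have old_block: "partition_term f g (insert (insert a B) (P - {B})) x =
      x * ((deriv ^^ card P) f (g x) *
        (deriv ((Omega ^^ card B) g) x * (\<Prod>C\<in>P - {B}. (Omega ^^ card C) g x)))"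
    if "B \<in> P" for B
  proof -
    have "insert a B \<notin> P - {B}"
      using block(2) by blast
    then have "card (insert (insert a B) (P - {B})) = Suc (card (P - {B}))"
      using \<open>finite P\<close> by (simp add: card_insert_disjoint)
    also have "\<dots> = card P"
      using \<open>finite P\<close> \<open>B \<in> P\<close> by (rule card.remove[symmetric])
    finally have "card (insert (insert a B) (P - {B})) = card P" .
    moreover have "(Omega ^^ card (insert a B)) g x = x * deriv ((Omega ^^ card B) g) x"
      using block[OF \<open>B \<in> P\<close>] Omega_Suc by simp
    ultimately show ?thesis
      using \<open>insert a B \<notin> P - {B}\<close> \<open>finite P\<close>
      by (simp add: partition_term_def mult.assoc)
  qed
  have "Omega (partition_term f g P) x =
      x * ((deriv ^^ Suc (card P)) f (g x) * deriv g x * (\<Prod>B\<in>P. (Omega ^^ card B) g x)) +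
      x * ((deriv ^^ card P) f (g x) *
        (\<Sum>B\<in>P. deriv ((Omega ^^ card B) g) x * (\<Prod>C\<in>P - {B}. (Omega ^^ card C) g x)))"
    unfolding Omega_def DERIV_imp_deriv[OF has_real_derivative_partition_term[OF f g]]
    by (simp only: distrib_left)
  also have "\<dots> = partition_term f g (insert {a} P) x +
      (\<Sum>B\<in>P. partition_term f g (insert (insert a B) (P - {B})) x)"
    unfolding new_block sum_distrib_left by (simp add: old_block)
  finally show ?thesis .
qed

theorem funpow_Omega_comp:
  assumes f: "smooth f" and g: "smooth g"
  shows "(Omega ^^ n) (f \<circ> g) = (\<lambda>x. \<Sum>P | partition_on {1..n} P. partition_term f g P x)"
proof (induction n)
  case 0
  have "{P. partition_on {1..0::nat} P} = {{}}"
    by (simp add: partition_on_empty)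
  then show ?case
    by (simp add: partition_term_def)
next
  case (Suc n)
  show ?case
  proof
    fix x
    have "(Omega ^^ Suc n) (f \<circ> g) x = Omega (\<lambda>y. \<Sum>P | partition_on {1..n} P. partition_term f g P y) x"
      by (simp only: funpow.simps(2) comp_apply Suc.IH)
    also have "\<dots> = (\<Sum>P | partition_on {1..n} P. Omega (partition_term f g P) x)"
      using has_real_derivative_partition_term[OF f g]
      by (intro Omega_sum) (auto simp: real_differentiable_def)
    also have "\<dots> = (\<Sum>P | partition_on {1..n} P. partition_term f g (insert {Suc n} P) x +
        (\<Sum>B\<in>P. partition_term f g (insert (insert (Suc n) B) (P - {B})) x))"
      by (intro sum.cong refl Omega_partition_term[OF f g]) auto
    also have "\<dots> = (\<Sum>Q | partition_on {1..Suc n} Q. partition_term f g Q x)"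
      using sum_partition_on_insert[of "{1..n}" "Suc n" "\<lambda>Q. partition_term f g Q x"]
      by (simp add: atLeastAtMostSuc_conv)
    finally show "(Omega ^^ Suc n) (f \<circ> g) x = (\<Sum>Q | partition_on {1..Suc n} Q. partition_term f g Q x)" .
  qed
qed

theorem lemma4p7:
  fixes f g :: "real \<Rightarrow> real" and n :: nat and x :: real
  assumes "n \<ge> 1"
    and "\<forall>k y. (deriv ^^ k) f differentiable at y"
    and "\<forall>k y. (deriv ^^ k) g differentiable at y"
  shows "(Omega ^^ n) (f \<circ> g) x =
    (\<Sum>\<pi> \<in> {P. partition_on {1..n} P}.
       (deriv ^^ card \<pi>) f (g x) * (\<Prod>B\<in>\<pi>. (Omega ^^ card B) g x))"
  using funpow_Omega_comp[of f g n] assms(2,3) by (simp add: smooth_def partition_term_def)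

end
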